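(* Let $\lambda>0$, $T\ge 1$, $X>0$, $Y>0$, and let $x_1,\dots,x_T\in\mathbb{R}^d$ with $\|x_t\|_2\le X$ and $y_1,\dots,y_T\in[-Y,Y]$ be arbitrary. Then for $\mathcal{A}\in\{\texttt{r},\texttt{f}\}$, $$R_T^{\mathcal{A}}\le c^{\mathcal{A}}\,(Y^{\mathcal{A}})^2\, d\log\Big(1+\frac{TX^2}{\lambda d}\Big)+\frac{\lambda\,(Y^{\mathcal{A}})^2\,T}{\lambda_{r_T}(G_T(0))},$$ where $c^{\texttt{r}}=4$, $c^{\texttt{f}}=1$, $Y^{\texttt{r}}=\max\{Y,\max_{1\le t\le T}|x_t^\top\theta^{\texttt{r}}_{t-1}|\}$, $Y^{\texttt{f}}=Y$, $r_T=\operatorname{rank}(G_T(0))$ and $\lambda_{r_T}(G_T(0))$ is the smallest positive eigenvalue of $G_T(0)$.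
   Context: Online regression with square loss: at each round $t$ the learner receives $x_t\in\mathbb{R}^d$, predicts $\hat y_t=x_t^\top\theta_{t-1}$, then observes $y_t$ and incurs $\ell_t=(\hat y_t-y_t)^2$. Write $\ell_t(\theta)=(x_t^\top\theta-y_t)^2$, $L_T(\theta)=\sum_{t=1}^T\ell_t(\theta)$, $L_T^{\mathcal{A}}=\sum_{t=1}^T(x_t^\top\theta^{\mathcal{A}}_{t-1}-y_t)^2$, and the regret $R_T^{\mathcal{A}}=L_T^{\mathcal{A}}-\min_{\theta\in\mathbb{R}^d}L_T(\theta)$. Let $G_t(\lambda)=\lambda I+\sum_{q=1}^t x_qx_q^\top$ and $b_t=\sum_{q=1}^t x_qy_q$. Online ridge regression ($\mathcal{A}=\texttt{r}$) uses $\theta^{\texttt{r}}_t=G_t(\lambda)^{-1}b_t$ (so $\theta_0^{\texttt r}=0$). The forward algorithm ($\mathcal{A}=\texttt{f}$) uses $\theta^{\texttt{f}}_{t-1}=G_t(\lambda)^{-1}b_{t-1}$, i.e. $\theta^{\texttt f}_{t-1}\in\arg\min_\theta L_{t-1}(\theta)+(x_t^\top\theta)^2+\lambda\|\theta\|_2^2$. *)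

theory Defs
  imports "HOL-Analysis.Analysis"
begin

definition outer :: "real^'d \<Rightarrow> real^'d^'d" where
  "outer x = (\<chi> i j. x$i * x$j)"

definition Gmat :: "(nat \<Rightarrow> real^'d) \<Rightarrow> real \<Rightarrow> nat \<Rightarrow> real^'d^'d" where
  "Gmat x lam t = lam *\<^sub>R mat 1 + (\<Sum>q=1..t. outer (x q))"

definition bvec :: "(nat \<Rightarrow> real^'d) \<Rightarrow> (nat \<Rightarrow> real) \<Rightarrow> nat \<Rightarrow> real^'d" where
  "bvec x y t = (\<Sum>q=1..t. y q *\<^sub>R x q)"

definition theta_r :: "(nat \<Rightarrow> real^'d) \<Rightarrow> (nat \<Rightarrow> real) \<Rightarrow> real \<Rightarrow> nat \<Rightarrow> real^'d" where
  "theta_r x y lam t = matrix_inv (Gmat x lam t) *v bvec x y t"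

text \<open>Forward algorithm: theta^f_{t-1} = G_t(lambda)^{-1} b_{t-1}; indexed by t (the round it is used in).\<close>
definition theta_f_round :: "(nat \<Rightarrow> real^'d) \<Rightarrow> (nat \<Rightarrow> real) \<Rightarrow> real \<Rightarrow> nat \<Rightarrow> real^'d" where
  "theta_f_round x y lam t = matrix_inv (Gmat x lam t) *v bvec x y (t - 1)"

definition Lfix :: "(nat \<Rightarrow> real^'d) \<Rightarrow> (nat \<Rightarrow> real) \<Rightarrow> nat \<Rightarrow> real^'d \<Rightarrow> real" where
  "Lfix x y T th = (\<Sum>t=1..T. (x t \<bullet> th - y t)^2)"

definition L_ridge :: "(nat \<Rightarrow> real^'d) \<Rightarrow> (nat \<Rightarrow> real) \<Rightarrow> real \<Rightarrow> nat \<Rightarrow> real" where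
  "L_ridge x y lam T = (\<Sum>t=1..T. (x t \<bullet> theta_r x y lam (t - 1) - y t)^2)"

definition L_forward :: "(nat \<Rightarrow> real^'d) \<Rightarrow> (nat \<Rightarrow> real) \<Rightarrow> real \<Rightarrow> nat \<Rightarrow> real" where
  "L_forward x y lam T = (\<Sum>t=1..T. (x t \<bullet> theta_f_round x y lam t - y t)^2)"

definition regret_ridge where
  "regret_ridge x y lam T = L_ridge x y lam T - (INF th. Lfix x y T th)"

definition regret_forward where
  "regret_forward x y lam T = L_forward x y lam T - (INF th. Lfix x y T th)"

definition is_eigenvalue :: "real^'d^'d \<Rightarrow> real \<Rightarrow> bool" where
  "is_eigenvalue A mu \<longleftrightarrow> (\<exists>v. v \<noteq> 0 \<and> A *v v = mu *\<^sub>R v)"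

text \<open>Smallest positive eigenvalue (lambda_{rank A}(A) for a PSD matrix A).
  Convention: 0 if there is no positive eigenvalue (i.e. A = 0 for PSD A).\<close>
definition min_pos_eig :: "real^'d^'d \<Rightarrow> real" where
  "min_pos_eig A = (if {mu. mu > 0 \<and> is_eigenvalue A mu} = {} then 0
                    else Min {mu. mu > 0 \<and> is_eigenvalue A mu})"

end

(*
  Let m_t = min_theta (L_t(theta) + lambda |theta|^2), attained at theta^r_t. Completing the
  square in G_t(lambda) bounds the loss of either algorithm in round t by
  m_t - m_(t-1) + c_t h_t, where h_t = x_t^T G_t(lambda)^-1 x_t and c_t is the squared
  prediction error of ridge regression, resp. y_t^2 for the forward algorithm. Summing, the
  m_t telescope, and m_T <= L_T(theta_LS) + lambda |theta_LS|^2 for the minimum-norm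
  least-squares solution theta_LS, whose squared norm is at most
  sum_t y_t^2 / lambda_(r_T)(G_T(0)) by the spectral decomposition of G_T(0). By the matrix
  determinant lemma 1 - h_t = det G_(t-1)(lambda) / det G_t(lambda), so
  sum_t h_t <= log det G_T - log det G_0, and AM-GM on the eigenvalues of G_T bounds this by
  d log(1 + T X^2 / (lambda d)).
*)
theory Submission
  imports Defs
begin

section \<open>Quadratic forms and the determinant of a rank-one update\<close>

lemma matrix_vector_mult_inner_transpose:
  fixes A :: "real^'n^'m"
  shows "(A *v u) \<bullet> v = u \<bullet> (transpose A *v v)"
  by (metis dot_lmul_matrix transpose_matrix_vector inner_commute)

lemma symmetric_matrix_inner_commute:
  fixes A :: "real^'n^'n"
  assumes "transpose A = A"
  shows "(A *v u) \<bullet> v = u \<bullet> (A *v v)"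
  using matrix_vector_mult_inner_transpose[of A u v] assms by simp

lemma invertible_mult_matrix_inv_vector:
  fixes A :: "real^'n^'n"
  assumes "invertible A"
  shows "A *v (matrix_inv A *v w) = w"
proof -
  have "A ** matrix_inv A = mat 1"
    using assms unfolding invertible_def matrix_inv_def by (rule someI2_ex) auto
  then show ?thesis by (simp add: matrix_vector_mul_assoc)
qed

lemma symmetric_quadratic_form_shift:
  fixes A :: "real^'n^'n"
  assumes "transpose A = A" and "A *v u = c"
  shows "v \<bullet> (A *v v) - 2 * (v \<bullet> c)
    = u \<bullet> (A *v u) - 2 * (u \<bullet> c) + (v - u) \<bullet> (A *v (v - u))"
proof -
  have "u \<bullet> (A *v v) = c \<bullet> v"
    using symmetric_matrix_inner_commute[OF assms(1), of u v] assms(2) by simp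
  then show ?thesis using assms(2)
    by (simp add: matrix_vector_mult_diff_distrib inner_diff_left inner_diff_right inner_commute
        algebra_simps)
qed

lemma psd_complete_square:
  fixes A :: "real^'n^'n"
  assumes "transpose A = A" and "\<And>v. v \<bullet> (A *v v) \<ge> 0" and "A *v z = u"
  shows "v \<bullet> (A *v v) + 2 * c * (u \<bullet> v) \<ge> - (c^2 * (u \<bullet> z))"
proof -
  have "z \<bullet> (A *v v) = u \<bullet> v"
    using symmetric_matrix_inner_commute[OF assms(1), of z v] assms(3) by simp
  then have "(v + c *\<^sub>R z) \<bullet> (A *v (v + c *\<^sub>R z))
      = v \<bullet> (A *v v) + 2 * c * (u \<bullet> v) + c^2 * (u \<bullet> z)"
    using assms(3) symmetric_matrix_inner_commute[OF assms(1), of v z]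
    by (simp add: matrix_vector_right_distrib inner_add_left inner_add_right
        scaleR_matrix_vector_assoc[symmetric] matrix_vector_mult_scaleR power2_eq_square
        inner_commute algebra_simps)
  moreover have "(v + c *\<^sub>R z) \<bullet> (A *v (v + c *\<^sub>R z)) \<ge> 0" by (rule assms(2))
  ultimately show ?thesis by simp
qed

lemma det_add_row_multiples_of_row:
  fixes A :: "'a::comm_ring_1^'n^'n"
  assumes "finite S" and "k \<notin> S"
  shows "det (\<chi> i. if i = k then u else if i \<in> S then row i A + a$i *s u else row i A)
       = det (\<chi> i. if i = k then u else row i A)"
  using assms
proof (induction S rule: finite_induct)
  case empty
  show ?case by (rule arg_cong[where f=det]) (simp add: vec_eq_iff)
next
  case (insert j S)
  let ?A = "(\<chi> i. if i = k then u else if i \<in> S then row i A + a$i *s u else row i A)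
    :: 'a^'n^'n"
  have "j \<noteq> k" using insert by auto
  then have "det (\<chi> m. if m = j then row j ?A + a$j *s row k ?A else row m ?A) = det ?A"
    by (rule det_row_operation)
  moreover have "(\<chi> m. if m = j then row j ?A + a$j *s row k ?A else row m ?A) =
     (\<chi> i. if i = k then u else if i \<in> insert j S then row i A + a$i *s u else row i A)"
    using insert \<open>j \<noteq> k\<close> by (auto simp: vec_eq_iff row_def)
  ultimately show ?case using insert by simp
qed

lemma det_add_multiples_of_vector_to_rows:
  fixes A :: "'a::comm_ring_1^'n^'n"
  assumes "finite S"
  shows "det (\<chi> i. if i \<in> S then row i A + a$i *s u else row i A)
       = det A + (\<Sum>k\<in>S. a$k * det (\<chi> i. if i = k then u else row i A))"
  using assms
proof (induction S rule: finite_induct)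
  case empty
  have "(\<chi> i. row i A) = A" by (vector row_def)
  then show ?case by simp
next
  case (insert k S)
  let ?c = "\<lambda>i. if i \<in> S then row i A + a$i *s u else row i A"
  have "(\<chi> i. if i \<in> insert k S then row i A + a$i *s u else row i A)
      = (\<chi> i. if i = k then row k A + a$k *s u else ?c i)"
    using insert by (auto simp: vec_eq_iff)
  also have "det \<dots> = det (\<chi> i. if i = k then row k A else ?c i)
      + det (\<chi> i. if i = k then a$k *s u else ?c i)"
    by (rule det_row_add)
  also have "(\<chi> i. if i = k then row k A else ?c i) = (\<chi> i. ?c i)"
    using insert by (auto simp: vec_eq_iff)
  also have "det (\<chi> i. if i = k then a$k *s u else ?c i)
      = a$k * det (\<chi> i. if i = k then u else ?c i)"
    by (rule det_row_mul)
  also have "det (\<chi> i. if i = k then u else ?c i) = det (\<chi> i. if i = k then u else row i A)"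
    using det_add_row_multiples_of_row[OF insert(1,2), where u=u and a=a and A=A] by simp
  finally show ?case using insert by (simp add: algebra_simps)
qed

lemma det_add_rank_one:
  fixes A :: "real^'n^'n" and u w :: "real^'n"
  assumes "transpose A *v w = u"
  shows "det (A + (\<chi> i j. a$i * u$j)) = det A * (1 + a \<bullet> w)"
proof -
  have rows: "A + (\<chi> i j. a$i * u$j)
      = (\<chi> i. if i \<in> UNIV then row i A + a$i *s u else row i A)"
    by (auto simp: vec_eq_iff row_def)
  have u: "u = (\<Sum>i\<in>UNIV. w$i *s row i A)"
    using assms[symmetric]
    by (simp add: matrix_vector_mult_def vec_eq_iff row_def transpose_def sum_component
        mult.commute)
  have "det (\<chi> i. if i = k then u else row i A) = w$k * det A" for k
    using cramer_lemma_transpose[of k w A] by (subst u) simp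
  then show ?thesis unfolding rows det_add_multiples_of_vector_to_rows[OF finite]
    by (simp add: inner_vec_def sum_distrib_left sum_distrib_right algebra_simps sum.distrib)
qed

section \<open>The spectral theorem for symmetric matrices\<close>

lemma quadratic_nonneg_imp_linear_coeff_zero:
  fixes a b :: real
  assumes "a \<ge> 0" and "\<And>t. 2 * t * a + t^2 * b \<ge> 0"
  shows "a = 0"
proof (rule ccontr)
  assume "a \<noteq> 0"
  with assms(1) have a: "a > 0" by simp
  define s where "s = a / (\<bar>b\<bar> + 1)"
  have s: "s > 0" using a by (simp add: s_def)
  have "2 * (-s) * a + (-s)^2 * b \<ge> 0" by (rule assms(2))
  then have "s * b \<ge> 2 * a" using s by (simp add: power2_eq_square algebra_simps)
  moreover have "s * b \<le> s * \<bar>b\<bar>" using s by (simp add: mult_left_mono)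
  moreover have "s * \<bar>b\<bar> < a" using a by (simp add: s_def divide_simps)
  ultimately show False using a by linarith
qed

lemma self_adjoint_rayleigh_minimizer_eigenvector:
  fixes f :: "'a::euclidean_space \<Rightarrow> 'a"
  assumes lin: "linear f" and sa: "\<And>u v. f u \<bullet> v = u \<bullet> f v"
    and S: "subspace S" "f ` S \<subseteq> S" and v: "v \<in> S" "v \<bullet> v = 1"
    and min: "\<And>z. z \<in> S \<Longrightarrow> (v \<bullet> f v) * (z \<bullet> z) \<le> z \<bullet> f z"
  shows "f v = (v \<bullet> f v) *\<^sub>R v"
proof -
  define m where "m = v \<bullet> f v"
  define w where "w = f v - m *\<^sub>R v"
  \<comment> \<open>Perturbing the minimizer \<open>v\<close> along \<open>w\<close> cannot decrease the Rayleigh quotient.\<close>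
  have "2 * t * (w \<bullet> w) + t^2 * (w \<bullet> f w - m * (w \<bullet> w)) \<ge> 0" for t
  proof -
    have "w \<in> S" unfolding w_def using S v by (auto intro: subspace_diff subspace_scale)
    then have "v + t *\<^sub>R w \<in> S" using v S(1) by (intro subspace_add subspace_scale)
    from min[OF this]
    have le: "m * ((v + t *\<^sub>R w) \<bullet> (v + t *\<^sub>R w)) \<le> (v + t *\<^sub>R w) \<bullet> f (v + t *\<^sub>R w)"
      unfolding m_def .
    have quad: "(v + t *\<^sub>R w) \<bullet> f (v + t *\<^sub>R w) = m + 2 * t * (w \<bullet> f v) + t^2 * (w \<bullet> f w)"
      using sa[of v w] linear_add[OF lin] linear_scale[OF lin] m_def
      by (simp add: inner_add inner_commute power2_eq_square algebra_simps)
    have norm: "(v + t *\<^sub>R w) \<bullet> (v + t *\<^sub>R w) = 1 + 2 * t * (v \<bullet> w) + t^2 * (w \<bullet> w)"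
      using v(2) by (simp only: inner_add_left inner_add_right inner_scaleR_left
          inner_scaleR_right inner_commute[of w v]) (simp add: power2_eq_square algebra_simps)
    have "w \<bullet> f v = w \<bullet> w + m * (v \<bullet> w)"
      unfolding w_def by (simp add: inner_diff algebra_simps inner_commute)
    with le have "m * (1 + 2 * t * (v \<bullet> w) + t^2 * (w \<bullet> w))
        \<le> m + 2 * t * (w \<bullet> w + m * (v \<bullet> w)) + t^2 * (w \<bullet> f w)"
      unfolding quad norm by simp
    then show ?thesis by (simp add: algebra_simps)
  qed
  then have "w \<bullet> w = 0" by (intro quadratic_nonneg_imp_linear_coeff_zero) auto
  then show ?thesis unfolding w_def m_def by simp
qed

lemma self_adjoint_unit_eigenvector_in_invariant_subspace:
  fixes f :: "'a::euclidean_space \<Rightarrow> 'a"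
  assumes lin: "linear f" and sa: "\<And>u v. f u \<bullet> v = u \<bullet> f v"
    and S: "subspace S" "f ` S \<subseteq> S" "S \<noteq> {0}"
  obtains v where "v \<in> S" "norm v = 1" "f v = (v \<bullet> f v) *\<^sub>R v"
proof -
  let ?K = "sphere 0 1 \<inter> S"
  have compact: "compact ?K" using closed_subspace[OF S(1)] by (intro compact_Int_closed) auto
  obtain s where "s \<in> S" "s \<noteq> 0" using S(1,3) subspace_0 by blast
  then have "(1 / norm s) *\<^sub>R s \<in> ?K" using S(1) by (simp add: subspace_scale)
  then have nonempty: "?K \<noteq> {}" by blast
  have "continuous_on ?K (\<lambda>v. v \<bullet> f v)"
    using lin by (intro continuous_intros linear_continuous_on)
      (simp add: linear_conv_bounded_linear)
  then obtain v where v: "v \<in> ?K" and min: "\<And>z. z \<in> ?K \<Longrightarrow> v \<bullet> f v \<le> z \<bullet> f z"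
    using continuous_attains_inf[OF compact nonempty] by blast
  have "(v \<bullet> f v) * (z \<bullet> z) \<le> z \<bullet> f z" if "z \<in> S" for z
  proof (cases "z = 0")
    case True
    then show ?thesis using linear_0[OF lin] by simp
  next
    case False
    let ?u = "(1 / norm z) *\<^sub>R z"
    have "?u \<in> ?K" using False that S(1) by (simp add: subspace_scale)
    then have "v \<bullet> f v \<le> ?u \<bullet> f ?u" by (rule min)
    also have "?u \<bullet> f ?u = (z \<bullet> f z) / (norm z)^2"
      using linear_scale[OF lin] by (simp add: power2_eq_square)
    finally have "(v \<bullet> f v) * (norm z)^2 \<le> z \<bullet> f z" using False by (simp add: field_simps)
    then show ?thesis by (simp add: power2_norm_eq_inner)
  qed
  moreover have "v \<in> S" "v \<bullet> v = 1" using v by (auto simp: dot_square_norm)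
  ultimately have "f v = (v \<bullet> f v) *\<^sub>R v"
    by (intro self_adjoint_rayleigh_minimizer_eigenvector[OF lin sa S(1,2)])
  with v show ?thesis by (intro that) auto
qed

lemma self_adjoint_orthogonal_complement_invariant:
  fixes f :: "'a::real_inner \<Rightarrow> 'a"
  assumes sa: "\<And>u v. f u \<bullet> v = u \<bullet> f v" and "f ` S \<subseteq> S" and "f v = \<mu> *\<^sub>R v"
  shows "f ` {w \<in> S. v \<bullet> w = 0} \<subseteq> {w \<in> S. v \<bullet> w = 0}"
proof
  fix z assume "z \<in> f ` {w \<in> S. v \<bullet> w = 0}"
  then obtain w where w: "w \<in> S" "v \<bullet> w = 0" "z = f w" by blast
  have "v \<bullet> f w = f v \<bullet> w" using sa by simp
  also have "\<dots> = 0" using assms(3) w(2) by simp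
  finally show "z \<in> {w \<in> S. v \<bullet> w = 0}" using w assms(2) by auto
qed

lemma span_insert_orthogonal_complement:
  fixes v :: "'a::real_inner"
  assumes S: "subspace S" and v: "v \<in> S" "norm v = 1" and B: "span B = {w \<in> S. v \<bullet> w = 0}"
  shows "span (insert v B) = S"
proof
  have "B \<subseteq> S" using B span_superset[of B] by blast
  then show "span (insert v B) \<subseteq> S" using S v(1) by (simp add: span_minimal)
  show "S \<subseteq> span (insert v B)"
  proof
    fix z assume "z \<in> S"
    then have "z - (v \<bullet> z) *\<^sub>R v \<in> span B"
      using S v unfolding B
      by (auto simp: inner_diff_right subspace_diff subspace_scale power2_norm_eq_inner[symmetric])
    then have "z - (v \<bullet> z) *\<^sub>R v \<in> span (insert v B)"
      using span_mono[of B "insert v B"] by auto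
    then show "z \<in> span (insert v B)"
      by (metis diff_add_cancel insertI1 span_add span_base span_scale)
  qed
qed

lemma self_adjoint_orthonormal_eigenbasis_of_subspace:
  fixes f :: "'a::euclidean_space \<Rightarrow> 'a"
  assumes lin: "linear f" and sa: "\<And>u v. f u \<bullet> v = u \<bullet> f v"
    and "subspace S" and "f ` S \<subseteq> S"
  shows "\<exists>B \<subseteq> S. pairwise orthogonal B \<and>
           (\<forall>b\<in>B. norm b = 1 \<and> f b = (b \<bullet> f b) *\<^sub>R b) \<and> span B = S"
  using assms(3,4)
proof (induction "dim S" arbitrary: S rule: less_induct)
  case less
  show ?case
  proof (cases "S = {0}")
    case True
    then show ?thesis by (intro exI[of _ "{}"]) auto
  next
    case False
    obtain v where v: "v \<in> S" "norm v = 1" "f v = (v \<bullet> f v) *\<^sub>R v"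
      using self_adjoint_unit_eigenvector_in_invariant_subspace[OF lin sa less.prems False] .
    define S' where "S' = {w \<in> S. v \<bullet> w = 0}"
    have "subspace S'" using less.prems(1) unfolding S'_def subspace_def
      by (auto simp: inner_add inner_scaleR_right)
    moreover have "f ` S' \<subseteq> S'"
      unfolding S'_def
      by (rule self_adjoint_orthogonal_complement_invariant[OF sa less.prems(2) v(3)])
    moreover have "dim S' < dim S"
    proof -
      have "v \<notin> S'" using v(2) unfolding S'_def by (simp add: dot_square_norm)
      then have "S' \<subset> S" using v(1) unfolding S'_def by blast
      then have "span S' \<subset> span S" using \<open>subspace S'\<close> less.prems(1) by (metis span_eq_iff)
      then show ?thesis by (rule dim_psubset)
    qed
    ultimately obtain B' where B': "B' \<subseteq> S'" "pairwise orthogonal B'"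
      "\<forall>b\<in>B'. norm b = 1 \<and> f b = (b \<bullet> f b) *\<^sub>R b" "span B' = S'"
      using less.hyps by blast
    have "insert v B' \<subseteq> S" using B'(1) v(1) unfolding S'_def by auto
    moreover have "pairwise orthogonal (insert v B')"
      using B'(1,2) unfolding S'_def pairwise_def orthogonal_def by (auto simp: inner_commute)
    moreover have "span (insert v B') = S"
      using span_insert_orthogonal_complement[OF less.prems(1) v(1,2)] B'(4) by (simp add: S'_def)
    ultimately show ?thesis using B'(3) v by (intro exI[of _ "insert v B'"]) auto
  qed
qed

theorem symmetric_matrix_orthogonal_eigenvectors:
  fixes A :: "real^'n^'n"
  assumes "transpose A = A"
  obtains Q :: "real^'n^'n" and \<mu> :: "'n \<Rightarrow> real"
  where "orthogonal_matrix Q" "\<And>i. A *v column i Q = \<mu> i *\<^sub>R column i Q"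
proof -
  obtain B where B: "pairwise orthogonal B"
    "\<forall>b\<in>B. norm b = 1 \<and> A *v b = (b \<bullet> (A *v b)) *\<^sub>R b" "span B = UNIV"
    using self_adjoint_orthonormal_eigenbasis_of_subspace[OF matrix_vector_mul_linear
        symmetric_matrix_inner_commute[OF assms] subspace_UNIV subset_UNIV] by auto
  have "independent B" using B(1,2) pairwise_orthogonal_independent by force
  then have "finite B" "card B = CARD('n)"
    using B(3) basis_card_eq_dim[of B UNIV] finiteI_independent by auto
  then obtain g where g: "bij_betw g (UNIV :: 'n set) B"
    using finite_same_card_bij[of "UNIV :: 'n set" B] by auto
  define Q :: "real^'n^'n" where "Q = (\<chi> i j. g j $ i)"
  have col: "column j Q = g j" for j by (simp add: Q_def column_def)
  have "g j \<in> B" for j using g by (auto simp: bij_betw_def)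
  moreover have "orthogonal (g i) (g j)" if "i \<noteq> j" for i j
    using B(1) g that by (auto simp: pairwise_def bij_betw_def inj_on_def)
  ultimately show thesis
    using B(2) by (intro that[of Q "\<lambda>j. g j \<bullet> (A *v g j)"])
      (simp_all add: orthogonal_matrix_orthonormal_columns col)
qed

definition diag_mat :: "('n \<Rightarrow> real) \<Rightarrow> real^'n^'n" where
  "diag_mat \<mu> = (\<chi> i j. if i = j then \<mu> i else 0)"

lemma diag_mat_mult_vector: "diag_mat \<mu> *v c = (\<chi> i. \<mu> i * c $ i)"
  by (simp add: diag_mat_def matrix_vector_mult_def vec_eq_iff if_distrib[of "\<lambda>z. z * _"]
      cong: if_cong)

lemma orthogonal_eigenvectors_diagonalize:
  fixes A Q :: "real^'n^'n"
  assumes Q: "orthogonal_matrix Q" and eig: "\<And>i. A *v column i Q = \<mu> i *\<^sub>R column i Q"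
  shows "A = Q ** diag_mat \<mu> ** transpose Q"
proof -
  have "A ** Q = Q ** diag_mat \<mu>"
  proof -
    have "(A ** Q)$i$j = (A *v column j Q)$i" "(Q ** diag_mat \<mu>)$i$j = \<mu> j * Q$i$j" for i j
      by (simp_all add: matrix_matrix_mult_def matrix_vector_mult_def column_def diag_mat_def
          if_distrib[of "\<lambda>z. _ * z"] cong: if_cong)
    then show ?thesis using eig by (simp add: vec_eq_iff column_def)
  qed
  then have "A ** (Q ** transpose Q) = Q ** diag_mat \<mu> ** transpose Q"
    by (simp add: matrix_mul_assoc)
  then show ?thesis using Q by (simp add: orthogonal_matrix_def)
qed

lemma det_eq_prod_eigenvalues:
  fixes A Q :: "real^'n^'n"
  assumes "orthogonal_matrix Q" and "\<And>i. A *v column i Q = \<mu> i *\<^sub>R column i Q"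
  shows "det A = (\<Prod>i\<in>UNIV. \<mu> i)"
proof -
  have "det A = det (diag_mat \<mu>) * det (Q ** transpose Q)"
    by (subst orthogonal_eigenvectors_diagonalize[OF assms]) (simp add: det_mul)
  also have "\<dots> = (\<Prod>i\<in>UNIV. \<mu> i)"
    using assms(1) by (simp add: orthogonal_matrix_def det_diagonal diag_mat_def)
  finally show ?thesis .
qed

lemma trace_eq_sum_eigenvalues:
  fixes A Q :: "real^'n^'n"
  assumes "orthogonal_matrix Q" and "\<And>i. A *v column i Q = \<mu> i *\<^sub>R column i Q"
  shows "trace A = (\<Sum>i\<in>UNIV. \<mu> i)"
proof -
  have "trace A = trace (diag_mat \<mu> ** (transpose Q ** Q))"
    by (subst orthogonal_eigenvectors_diagonalize[OF assms])
       (metis matrix_mul_assoc trace_mul_sym)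
  then show ?thesis
    using assms(1) by (simp add: orthogonal_matrix_def trace_def diag_mat_def)
qed

lemma orthogonal_eigenvalue_eq_quadratic_form:
  fixes A Q :: "real^'n^'n"
  assumes "orthogonal_matrix Q" and "A *v column i Q = \<mu> *\<^sub>R column i Q"
  shows "\<mu> = column i Q \<bullet> (A *v column i Q)"
proof -
  have "column i Q \<bullet> column i Q = 1"
    using assms(1) by (simp add: orthogonal_matrix_orthonormal_columns norm_eq_1)
  then show ?thesis using assms(2) by simp
qed

lemma is_eigenvalue_column:
  fixes A Q :: "real^'n^'n"
  assumes "orthogonal_matrix Q" and "A *v column i Q = \<mu> *\<^sub>R column i Q"
  shows "is_eigenvalue A \<mu>"
proof -
  have "norm (column i Q) = 1" using assms(1) by (simp add: orthogonal_matrix_orthonormal_columns)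
  then have "column i Q \<noteq> 0" by auto
  then show ?thesis using assms(2) unfolding is_eigenvalue_def by blast
qed

lemma eigenvalue_among_diagonal_entries:
  fixes A Q :: "real^'n^'n"
  assumes Q: "orthogonal_matrix Q" and eig: "\<And>i. A *v column i Q = \<mu> i *\<^sub>R column i Q"
    and "is_eigenvalue A m"
  shows "m \<in> range \<mu>"
proof -
  obtain v where v: "v \<noteq> 0" "A *v v = m *\<^sub>R v" using assms(3) by (auto simp: is_eigenvalue_def)
  define c where "c = transpose Q *v v"
  have "Q *v c = v"
    using Q by (metis c_def matrix_vector_mul_assoc matrix_vector_mul_lid orthogonal_matrix_def)
  then have "c \<noteq> 0" using v(1) by auto
  then obtain i where "c $ i \<noteq> 0" by (auto simp: vec_eq_iff)
  have "diag_mat \<mu> *v c = (transpose Q ** Q) *v (diag_mat \<mu> *v c)"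
    using Q by (simp add: orthogonal_matrix_def)
  also have "\<dots> = transpose Q *v (A *v v)"
    by (subst orthogonal_eigenvectors_diagonalize[OF Q eig])
       (simp only: c_def matrix_vector_mul_assoc matrix_mul_assoc)
  also have "\<dots> = m *\<^sub>R c" using v(2) by (simp add: c_def matrix_vector_mult_scaleR)
  finally have "\<mu> i * c $ i = m * c $ i" by (simp add: diag_mat_mult_vector vec_eq_iff)
  then show ?thesis using \<open>c $ i \<noteq> 0\<close> by (metis mult_cancel_right rangeI)
qed

lemma finite_eigenvalues_symmetric:
  fixes A :: "real^'n^'n"
  assumes "transpose A = A"
  shows "finite {m. is_eigenvalue A m}"
proof -
  obtain Q \<mu> where "orthogonal_matrix Q" "\<And>i. A *v column i Q = \<mu> i *\<^sub>R column i Q"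
    using symmetric_matrix_orthogonal_eigenvectors[OF assms] by blast
  then have "{m. is_eigenvalue A m} \<subseteq> range \<mu>"
    using eigenvalue_among_diagonal_entries by blast
  then show ?thesis by (rule finite_subset) simp
qed

lemma min_pos_eig_nonneg:
  fixes A :: "real^'n^'n"
  assumes "transpose A = A"
  shows "min_pos_eig A \<ge> 0"
proof -
  let ?E = "{m. m > 0 \<and> is_eigenvalue A m}"
  have "finite ?E" using finite_eigenvalues_symmetric[OF assms] by (rule rev_finite_subset) auto
  show ?thesis
  proof (cases "?E = {}")
    case False
    then show ?thesis using Min_in[OF \<open>finite ?E\<close> False] unfolding min_pos_eig_def by auto
  qed (simp add: min_pos_eig_def)
qed

lemma min_pos_eig_le:
  fixes A :: "real^'n^'n"
  assumes "transpose A = A" and "is_eigenvalue A m" and "m > 0"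
  shows "0 < min_pos_eig A" and "min_pos_eig A \<le> m"
proof -
  let ?E = "{m. m > 0 \<and> is_eigenvalue A m}"
  have finite: "finite ?E"
    using finite_eigenvalues_symmetric[OF assms(1)] by (rule rev_finite_subset) auto
  have "m \<in> ?E" using assms(2,3) by simp
  then show "0 < min_pos_eig A" and "min_pos_eig A \<le> m"
    unfolding min_pos_eig_def using Min_in[OF finite] Min_le[OF finite] by auto
qed

lemma psd_pseudo_inverse_solution:
  fixes A Q :: "real^'n^'n"
  assumes sym: "transpose A = A" and Q: "orthogonal_matrix Q"
    and eig: "\<And>i. A *v column i Q = \<nu> i *\<^sub>R column i Q" and nonneg: "\<And>i. \<nu> i \<ge> 0"
    and kernel: "\<And>i. \<nu> i = 0 \<Longrightarrow> column i Q \<bullet> b = 0"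
  obtains \<theta> where "A *v \<theta> = b" and "min_pos_eig A * (\<theta> \<bullet> \<theta>) \<le> \<theta> \<bullet> b"
    and "min_pos_eig A = 0 \<Longrightarrow> \<theta> = 0"
proof -
  define \<beta> where "\<beta> = transpose Q *v b"
  \<comment> \<open>Invert \<open>A\<close> on the eigenvectors with nonzero eigenvalue; \<open>b\<close> has no component on the others.\<close>
  define c where "c = (\<chi> i. if \<nu> i = 0 then 0 else \<beta> $ i / \<nu> i)"
  have "\<beta> $ i = column i Q \<bullet> b" for i
    by (simp add: \<beta>_def vector_matrix_mult_def column_def inner_vec_def mult.commute)
  then have "diag_mat \<nu> *v c = \<beta>"
    using kernel by (auto simp: diag_mat_mult_vector c_def vec_eq_iff)
  have "A *v (Q *v c) = Q *v (diag_mat \<nu> *v ((transpose Q ** Q) *v c))"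
    by (subst orthogonal_eigenvectors_diagonalize[OF Q eig])
      (simp only: matrix_vector_mul_assoc matrix_mul_assoc)
  also have "\<dots> = Q *v \<beta>"
    using Q \<open>diag_mat \<nu> *v c = \<beta>\<close> by (simp add: orthogonal_matrix_def)
  also have "\<dots> = b"
    by (metis Q \<beta>_def matrix_vector_mul_assoc matrix_vector_mul_lid orthogonal_matrix_def)
  finally have solves: "A *v (Q *v c) = b" .
  have mpe: "0 < min_pos_eig A \<and> min_pos_eig A \<le> \<nu> i" if "\<nu> i \<noteq> 0" for i
  proof -
    have "\<nu> i > 0" using nonneg[of i] that by (simp add: less_le)
    then show ?thesis using min_pos_eig_le[OF sym is_eigenvalue_column[OF Q eig]] by blast
  qed
  have "min_pos_eig A * (c $ i * c $ i) \<le> c $ i * \<beta> $ i" for i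
  proof (cases "\<nu> i = 0")
    case False
    have "min_pos_eig A * (c $ i * c $ i) \<le> \<nu> i * (c $ i * c $ i)"
      using mpe[OF False] by (intro mult_right_mono) auto
    also have "\<dots> = c $ i * \<beta> $ i" using False by (simp add: c_def field_simps)
    finally show ?thesis .
  qed (simp add: c_def)
  then have "min_pos_eig A * (c \<bullet> c) \<le> c \<bullet> \<beta>"
    unfolding inner_vec_def by (simp add: sum_distrib_left sum_mono)
  moreover have "(Q *v c) \<bullet> b = c \<bullet> \<beta>"
    by (simp only: \<beta>_def matrix_vector_mult_inner_transpose)
  moreover have "(Q *v c) \<bullet> (Q *v c) = c \<bullet> c"
    using Q by (simp only: matrix_vector_mult_inner_transpose matrix_vector_mul_assoc)
      (simp add: orthogonal_matrix_def)
  moreover have "c = 0" if "min_pos_eig A = 0"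
    using mpe that by (auto simp: c_def vec_eq_iff)
  ultimately show thesis using solves by (intro that[of "Q *v c"]) auto
qed

lemma sum_ln_le_card_mult_ln_mean:
  fixes \<mu> :: "'a \<Rightarrow> real"
  assumes "finite B" and "B \<noteq> {}" and "\<And>b. b \<in> B \<Longrightarrow> \<mu> b > 0"
  shows "(\<Sum>b\<in>B. ln (\<mu> b)) \<le> real (card B) * ln ((\<Sum>b\<in>B. \<mu> b) / real (card B))"
proof -
  define m where "m = (\<Sum>b\<in>B. \<mu> b) / real (card B)"
  have card: "card B > 0" using assms(1,2) by (simp add: card_gt_0_iff)
  have sum_pos: "(\<Sum>b\<in>B. \<mu> b) > 0" using assms by (intro sum_pos) auto
  then have m: "m > 0" using card by (simp add: m_def)
  \<comment> \<open>Tangent line of the concave \<open>ln\<close> at the mean \<open>m\<close>.\<close>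
  have "ln (\<mu> b) \<le> ln m + (\<mu> b / m - 1)" if "b \<in> B" for b
    using ln_le_minus_one[of "\<mu> b / m"] assms(3)[OF that] m by (simp add: ln_div)
  then have "(\<Sum>b\<in>B. ln (\<mu> b)) \<le> (\<Sum>b\<in>B. ln m + (\<mu> b / m - 1))" by (rule sum_mono)
  also have "\<dots> = real (card B) * ln m + ((\<Sum>b\<in>B. \<mu> b) / m - real (card B))"
    by (simp add: sum.distrib sum_subtractf sum_divide_distrib[symmetric])
  also have "(\<Sum>b\<in>B. \<mu> b) / m = real (card B)" using sum_pos card by (simp add: m_def)
  finally show ?thesis by (simp add: m_def)
qed

lemma pos_definite_eigenvalues_pos:
  fixes A Q :: "real^'n^'n"
  assumes "\<And>v. v \<noteq> 0 \<Longrightarrow> v \<bullet> (A *v v) > 0"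
    and "orthogonal_matrix Q" and "\<And>i. A *v column i Q = \<mu> i *\<^sub>R column i Q"
  shows "\<mu> i > 0"
proof -
  have "column i Q \<noteq> 0"
    using assms(2) by (auto simp: orthogonal_matrix_orthonormal_columns dest: spec[of _ i])
  then show ?thesis
    using assms(1) orthogonal_eigenvalue_eq_quadratic_form[OF assms(2,3)] by simp
qed

lemma det_pos_definite_pos:
  fixes A :: "real^'n^'n"
  assumes "transpose A = A" and "\<And>v. v \<noteq> 0 \<Longrightarrow> v \<bullet> (A *v v) > 0"
  shows "det A > 0"
proof -
  obtain Q \<mu> where Q: "orthogonal_matrix Q" "\<And>i. A *v column i Q = \<mu> i *\<^sub>R column i Q"
    using symmetric_matrix_orthogonal_eigenvectors[OF assms(1)] by blast
  then show ?thesis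
    using det_eq_prod_eigenvalues[OF Q] pos_definite_eigenvalues_pos[OF assms(2) Q]
    by (simp add: prod_pos)
qed

lemma ln_det_le_card_mult_ln_mean_trace:
  fixes A :: "real^'n^'n"
  assumes "transpose A = A" and "\<And>v. v \<noteq> 0 \<Longrightarrow> v \<bullet> (A *v v) > 0"
  shows "ln (det A) \<le> real CARD('n) * ln (trace A / real CARD('n))"
proof -
  obtain Q \<mu> where Q: "orthogonal_matrix Q" "\<And>i. A *v column i Q = \<mu> i *\<^sub>R column i Q"
    using symmetric_matrix_orthogonal_eigenvectors[OF assms(1)] by blast
  have \<mu>: "\<mu> i > 0" for i by (rule pos_definite_eigenvalues_pos[OF assms(2) Q])
  show ?thesis
    unfolding det_eq_prod_eigenvalues[OF Q] trace_eq_sum_eigenvalues[OF Q]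
    using sum_ln_le_card_mult_ln_mean[of UNIV \<mu>] \<mu> by (simp add: ln_prod less_imp_neq[symmetric])
qed

section \<open>Gram matrices\<close>

lemma outer_mult_vector: "outer a *v v = (a \<bullet> v) *\<^sub>R a"
  by (simp add: outer_def matrix_vector_mult_def vec_eq_iff inner_vec_def sum_distrib_left
      mult.assoc mult.commute mult.left_commute)

lemma sum_matrix_mult_vector: "(\<Sum>i\<in>S. M i) *v (v::real^'n) = (\<Sum>i\<in>S. M i *v v)"
  for M :: "'a \<Rightarrow> real^'n^'m"
  by (induction S rule: infinite_finite_induct) (auto simp: matrix_vector_mult_add_rdistrib)

lemma Gmat_mult_vector: "Gmat x lam t *v v = lam *\<^sub>R v + (\<Sum>q=1..t. (x q \<bullet> v) *\<^sub>R x q)"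
  by (simp add: Gmat_def matrix_vector_mult_add_rdistrib scaleR_matrix_vector_assoc[symmetric]
      sum_matrix_mult_vector outer_mult_vector)

lemma Gmat_symmetric: "transpose (Gmat x lam t) = Gmat x lam t"
  by (simp add: Gmat_def transpose_def outer_def vec_eq_iff mat_def sum_component mult.commute)

lemma Gmat_quadratic_form: "v \<bullet> (Gmat x lam t *v v) = lam * (v \<bullet> v) + (\<Sum>q=1..t. (x q \<bullet> v)^2)"
  by (simp add: Gmat_mult_vector inner_add_right inner_sum_right power2_eq_square inner_commute)

lemma Gmat_psd: "lam \<ge> 0 \<Longrightarrow> v \<bullet> (Gmat x lam t *v v) \<ge> 0"
  unfolding Gmat_quadratic_form by (intro add_nonneg_nonneg sum_nonneg) auto

lemma Gmat_Suc: "Gmat x lam (Suc t) = Gmat x lam t + outer (x (Suc t))"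
  by (simp add: Gmat_def algebra_simps)

lemma Gmat_Suc_quadratic_form:
  "v \<bullet> (Gmat x lam (Suc t) *v v) = v \<bullet> (Gmat x lam t *v v) + (x (Suc t) \<bullet> v)^2"
  by (simp add: Gmat_Suc matrix_vector_mult_add_rdistrib outer_mult_vector inner_add_right
      power2_eq_square inner_commute)

lemma Gmat_pos_definite:
  assumes "lam > 0" and "v \<noteq> 0"
  shows "v \<bullet> (Gmat x lam t *v v) > 0"
proof -
  have "0 < lam * (v \<bullet> v)" using assms by simp
  also have "\<dots> \<le> v \<bullet> (Gmat x lam t *v v)"
    unfolding Gmat_quadratic_form by (simp add: sum_nonneg)
  finally show ?thesis .
qed

lemma Gmat_invertible:
  assumes "lam > 0"
  shows "invertible (Gmat x lam t)"
  unfolding invertible_left_inverse matrix_left_invertible_ker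
  using Gmat_pos_definite[OF assms] by (metis inner_zero_right less_irrefl)

lemma trace_Gmat: "trace (Gmat x lam t) = lam * real CARD('d) + (\<Sum>q=1..t. x q \<bullet> x q)"
  for x :: "nat \<Rightarrow> real^'d"
  by (simp add: Gmat_def trace_add trace_def mat_def outer_def sum_component inner_vec_def
      power2_eq_square sum.distrib) (rule sum.swap)

lemma det_Gmat_pos: "lam > 0 \<Longrightarrow> det (Gmat x lam t) > 0"
  by (intro det_pos_definite_pos Gmat_symmetric Gmat_pos_definite)

lemma det_Gmat_0: "det (Gmat x lam 0) = lam ^ CARD('d)"
  for x :: "nat \<Rightarrow> real^'d"
  by (simp add: Gmat_def det_diagonal mat_def)

section \<open>Regularized least squares\<close>

definition ridge_loss ::
    "(nat \<Rightarrow> real^'d) \<Rightarrow> (nat \<Rightarrow> real) \<Rightarrow> real \<Rightarrow> nat \<Rightarrow> real^'d \<Rightarrow> real" where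
  "ridge_loss x y lam t \<theta> = Lfix x y t \<theta> + lam * (\<theta> \<bullet> \<theta>)"

lemma ridge_loss_quadratic_form:
  "ridge_loss x y lam t \<theta>
    = \<theta> \<bullet> (Gmat x lam t *v \<theta>) - 2 * (\<theta> \<bullet> bvec x y t) + (\<Sum>q=1..t. (y q)^2)"
proof -
  have "Lfix x y t \<theta> = (\<Sum>q=1..t. (x q \<bullet> \<theta>)^2) - 2 * (\<Sum>q=1..t. y q * (x q \<bullet> \<theta>))
      + (\<Sum>q=1..t. (y q)^2)"
    by (simp add: Lfix_def power2_diff sum.distrib sum_subtractf sum_distrib_left algebra_simps)
  moreover have "\<theta> \<bullet> bvec x y t = (\<Sum>q=1..t. y q * (x q \<bullet> \<theta>))"
    by (simp add: bvec_def inner_sum_right inner_commute)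
  ultimately show ?thesis by (simp add: ridge_loss_def Gmat_quadratic_form inner_commute)
qed

lemma ridge_loss_Suc:
  "ridge_loss x y lam (Suc t) \<theta> = ridge_loss x y lam t \<theta> + (x (Suc t) \<bullet> \<theta> - y (Suc t))^2"
  by (simp add: ridge_loss_def Lfix_def)

lemma ridge_loss_excess:
  assumes "Gmat x lam t *v \<theta>\<^sub>0 = bvec x y t"
  shows "ridge_loss x y lam t \<theta>
    = ridge_loss x y lam t \<theta>\<^sub>0 + (\<theta> - \<theta>\<^sub>0) \<bullet> (Gmat x lam t *v (\<theta> - \<theta>\<^sub>0))"
  using symmetric_quadratic_form_shift[OF Gmat_symmetric assms, of \<theta>]
  by (simp add: ridge_loss_quadratic_form)

lemma ridge_loss_minimal:
  assumes "lam \<ge> 0" and "Gmat x lam t *v \<theta>\<^sub>0 = bvec x y t"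
  shows "ridge_loss x y lam t \<theta>\<^sub>0 \<le> ridge_loss x y lam t \<theta>"
  using ridge_loss_excess[OF assms(2), of \<theta>] Gmat_psd[OF assms(1)] by simp

lemma least_squares_min_norm_solution:
  fixes x :: "nat \<Rightarrow> real^'d" and y :: "nat \<Rightarrow> real"
  obtains \<theta> where "\<And>\<theta>'. Lfix x y T \<theta> \<le> Lfix x y T \<theta>'"
    and "\<theta> \<bullet> \<theta> \<le> (\<Sum>t=1..T. (y t)^2) / min_pos_eig (Gmat x 0 T)"
proof -
  let ?G = "Gmat x 0 T" and ?b = "bvec x y T" and ?S = "\<Sum>t=1..T. (y t)^2"
  obtain Q \<nu> where Q: "orthogonal_matrix Q"
    and eig: "\<And>i. ?G *v column i Q = \<nu> i *\<^sub>R column i Q"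
    using symmetric_matrix_orthogonal_eigenvectors[OF Gmat_symmetric[of x 0 T]] by blast
  have \<nu>: "\<nu> i = (\<Sum>t=1..T. (x t \<bullet> column i Q)^2)" for i
    using orthogonal_eigenvalue_eq_quadratic_form[OF Q eig] by (simp add: Gmat_quadratic_form)
  then have "\<nu> i \<ge> 0" for i by (simp add: sum_nonneg)
  moreover have "column i Q \<bullet> ?b = 0" if "\<nu> i = 0" for i
  proof -
    have "\<forall>t\<in>{1..T}. x t \<bullet> column i Q = 0"
      using that \<nu>[of i] by (simp add: sum_nonneg_eq_0_iff)
    then show ?thesis by (simp add: bvec_def inner_sum_right inner_commute)
  qed
  ultimately obtain \<theta> where sol: "?G *v \<theta> = ?b"
    and norm: "min_pos_eig ?G * (\<theta> \<bullet> \<theta>) \<le> \<theta> \<bullet> ?b" and zero: "min_pos_eig ?G = 0 \<Longrightarrow> \<theta> = 0"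
    using psd_pseudo_inverse_solution[OF Gmat_symmetric Q eig] by blast
  have "Lfix x y T \<theta> \<le> Lfix x y T \<theta>'" for \<theta>'
    using ridge_loss_minimal[of 0, OF _ sol] by (simp add: ridge_loss_def)
  \<comment> \<open>If \<open>G\<^sub>T(0) = 0\<close> then \<open>min_pos_eig\<close> is \<open>0\<close>, the right-hand side is \<open>?S / 0 = 0\<close>, and \<open>\<theta> = 0\<close>.\<close>
  moreover have "\<theta> \<bullet> \<theta> \<le> ?S / min_pos_eig ?G"
  proof (cases "min_pos_eig ?G = 0")
    case False
    have "ridge_loss x y 0 T \<theta> = ?S - \<theta> \<bullet> ?b"
      using sol by (simp add: ridge_loss_quadratic_form inner_commute)
    then have "\<theta> \<bullet> ?b \<le> ?S"
      using sum_nonneg[of "{1..T}" "\<lambda>t. (x t \<bullet> \<theta> - y t)^2"]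
      by (simp add: ridge_loss_def Lfix_def)
    then show ?thesis
      using norm False min_pos_eig_nonneg[OF Gmat_symmetric[of x 0 T]] by (simp add: field_simps)
  qed (use zero in simp)
  ultimately show thesis by (rule that)
qed

section \<open>Regret of ridge regression and of the forward algorithm\<close>

lemma sum_le_telescope:
  fixes a m c :: "nat \<Rightarrow> real"
  assumes "\<And>n. n < T \<Longrightarrow> a (Suc n) \<le> m (Suc n) - m n + c (Suc n)"
  shows "(\<Sum>t=1..T. a t) \<le> m T - m 0 + (\<Sum>t=1..T. c t)"
  using assms
proof (induction T)
  case (Suc T)
  have "(\<Sum>t=1..T. a t) \<le> m T - m 0 + (\<Sum>t=1..T. c t)"
    using Suc.prems by (intro Suc.IH) simp
  moreover have "a (Suc T) \<le> m (Suc T) - m T + c (Suc T)"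
    using Suc.prems by simp
  ultimately show ?case by simp
qed simp

definition leverage :: "(nat \<Rightarrow> real^'d) \<Rightarrow> real \<Rightarrow> nat \<Rightarrow> real" where
  "leverage x lam t = x t \<bullet> (matrix_inv (Gmat x lam t) *v x t)"

context
  fixes x :: "nat \<Rightarrow> real^'d" and y :: "nat \<Rightarrow> real" and lam :: real
  assumes lam: "lam > 0"
begin

lemma Gmat_mult_matrix_inv: "Gmat x lam t *v (matrix_inv (Gmat x lam t) *v v) = v"
  by (rule invertible_mult_matrix_inv_vector[OF Gmat_invertible[OF lam]])

lemma Gmat_theta_r: "Gmat x lam t *v theta_r x y lam t = bvec x y t"
  unfolding theta_r_def by (rule Gmat_mult_matrix_inv)

lemma Gmat_theta_f_round: "Gmat x lam (Suc t) *v theta_f_round x y lam (Suc t) = bvec x y t"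
  unfolding theta_f_round_def using Gmat_mult_matrix_inv by simp

lemma leverage_nonneg: "leverage x lam t \<ge> 0"
proof -
  let ?z = "matrix_inv (Gmat x lam t) *v x t"
  have "leverage x lam t = ?z \<bullet> (Gmat x lam t *v ?z)"
    by (simp add: leverage_def Gmat_mult_matrix_inv inner_commute)
  then show ?thesis using Gmat_psd[OF less_imp_le[OF lam]] by simp
qed

lemma leverage_complete_square:
  "v \<bullet> (Gmat x lam t *v v) + 2 * c * (x t \<bullet> v) \<ge> - (c^2 * leverage x lam t)"
  unfolding leverage_def
  by (rule psd_complete_square[OF Gmat_symmetric Gmat_psd[OF less_imp_le[OF lam]]
        Gmat_mult_matrix_inv])

lemma ridge_round_loss_le:
  fixes n :: nat
  defines "e \<equiv> x (Suc n) \<bullet> theta_r x y lam n - y (Suc n)"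
  shows "e^2 \<le> ridge_loss x y lam (Suc n) (theta_r x y lam (Suc n))
    - ridge_loss x y lam n (theta_r x y lam n) + e^2 * leverage x lam (Suc n)"
proof -
  let ?t = "Suc n"
  let ?\<theta> = "theta_r x y lam ?t"
  let ?d = "?\<theta> - theta_r x y lam n"
  have "ridge_loss x y lam ?t ?\<theta> = ridge_loss x y lam n ?\<theta> + (x ?t \<bullet> ?\<theta> - y ?t)^2"
    by (rule ridge_loss_Suc)
  moreover have "ridge_loss x y lam n ?\<theta>
      = ridge_loss x y lam n (theta_r x y lam n) + ?d \<bullet> (Gmat x lam n *v ?d)"
    by (rule ridge_loss_excess[OF Gmat_theta_r])
  moreover have "?d \<bullet> (Gmat x lam n *v ?d) = ?d \<bullet> (Gmat x lam ?t *v ?d) - (x ?t \<bullet> ?d)^2"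
    unfolding Gmat_Suc_quadratic_form by simp
  moreover have "x ?t \<bullet> ?\<theta> - y ?t = x ?t \<bullet> ?d + e"
    unfolding e_def by (simp add: inner_diff_right)
  then have "(x ?t \<bullet> ?\<theta> - y ?t)^2 = (x ?t \<bullet> ?d)^2 + 2 * e * (x ?t \<bullet> ?d) + e^2"
    by (simp only: power2_sum) (simp add: algebra_simps)
  ultimately show ?thesis
    using leverage_complete_square[where v="?d" and c=e and t="?t"] by linarith
qed

lemma forward_round_loss_le:
  fixes n :: nat
  defines "yh \<equiv> x (Suc n) \<bullet> theta_f_round x y lam (Suc n)"
  shows "(yh - y (Suc n))^2 \<le> ridge_loss x y lam (Suc n) (theta_r x y lam (Suc n))
    - ridge_loss x y lam n (theta_r x y lam n) + (y (Suc n))^2 * leverage x lam (Suc n)"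
proof -
  let ?t = "Suc n"
  let ?\<theta> = "theta_r x y lam ?t" and ?\<theta>f = "theta_f_round x y lam ?t"
  let ?d = "?\<theta> - ?\<theta>f"
  \<comment> \<open>The forward algorithm is defined as the minimizer of \<open>?F\<close>.\<close>
  let ?F = "\<lambda>\<theta>. ridge_loss x y lam n \<theta> + (x ?t \<bullet> \<theta>)^2"
  have F: "?F \<theta> = \<theta> \<bullet> (Gmat x lam ?t *v \<theta>) - 2 * (\<theta> \<bullet> bvec x y n) + (\<Sum>q=1..n. (y q)^2)"
    for \<theta>
    unfolding ridge_loss_quadratic_form Gmat_Suc_quadratic_form by (simp add: inner_commute)
  have "?F ?\<theta> = ?F ?\<theta>f + ?d \<bullet> (Gmat x lam ?t *v ?d)"
    using symmetric_quadratic_form_shift[OF Gmat_symmetric Gmat_theta_f_round, of ?\<theta>]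
    unfolding F by simp
  moreover have "ridge_loss x y lam ?t ?\<theta> = ?F ?\<theta> - 2 * (y ?t * (x ?t \<bullet> ?\<theta>)) + (y ?t)^2"
    unfolding ridge_loss_Suc by (simp add: power2_diff algebra_simps)
  moreover have "?F ?\<theta>f = ridge_loss x y lam n ?\<theta>f + yh^2"
    by (simp add: yh_def)
  moreover have "ridge_loss x y lam n (theta_r x y lam n) \<le> ridge_loss x y lam n ?\<theta>f"
    using lam by (intro ridge_loss_minimal Gmat_theta_r) simp
  moreover have "y ?t * (x ?t \<bullet> ?\<theta>) = y ?t * yh + y ?t * (x ?t \<bullet> ?d)"
    by (simp add: yh_def inner_diff_right algebra_simps)
  moreover have "?d \<bullet> (Gmat x lam ?t *v ?d) - 2 * (y ?t * (x ?t \<bullet> ?d))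
      \<ge> - ((y ?t)^2 * leverage x lam ?t)"
    using leverage_complete_square[where v="?d" and c="- y ?t" and t="?t"] by simp
  moreover have "(yh - y ?t)^2 = yh^2 - 2 * (y ?t * yh) + (y ?t)^2"
    by (simp add: power2_diff algebra_simps)
  ultimately show ?thesis by linarith
qed

lemma leverage_le_ln_det_ratio:
  "leverage x lam (Suc n) \<le> ln (det (Gmat x lam (Suc n))) - ln (det (Gmat x lam n))"
proof -
  let ?t = "Suc n"
  have "Gmat x lam n = Gmat x lam ?t + (\<chi> i j. (- x ?t)$i * (x ?t)$j)"
    by (simp add: Gmat_Suc outer_def vec_eq_iff)
  then have ratio: "det (Gmat x lam n) = det (Gmat x lam ?t) * (1 - leverage x lam ?t)"
    using det_add_rank_one[of "Gmat x lam ?t" "matrix_inv (Gmat x lam ?t) *v x ?t" "x ?t" "- x ?t"]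
    by (simp add: Gmat_symmetric Gmat_mult_matrix_inv leverage_def)
  have pos: "det (Gmat x lam n) > 0" "det (Gmat x lam ?t) > 0"
    using det_Gmat_pos[OF lam] by auto
  with ratio have lev: "1 - leverage x lam ?t > 0" by (metis zero_less_mult_pos)
  have "ln (det (Gmat x lam n)) = ln (det (Gmat x lam ?t)) + ln (1 - leverage x lam ?t)"
    unfolding ratio using pos(2) lev by (simp add: ln_mult)
  moreover have "ln (1 - leverage x lam ?t) \<le> - leverage x lam ?t"
    using ln_le_minus_one[OF lev] by simp
  ultimately show ?thesis by simp
qed

lemma sum_leverage_le:
  assumes "\<And>t. t \<in> {1..T} \<Longrightarrow> norm (x t) \<le> X"
  shows "(\<Sum>t=1..T. leverage x lam t)
    \<le> real CARD('d) * ln (1 + real T * X^2 / (lam * real CARD('d)))"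
proof -
  let ?d = "real CARD('d)" and ?G = "Gmat x lam T"
  let ?z = "real T * X^2 / (lam * real CARD('d))"
  have "(\<Sum>t=1..T. leverage x lam t) \<le> ln (det ?G) - ln (det (Gmat x lam 0)) + (\<Sum>t=1..T. 0)"
    using leverage_le_ln_det_ratio by (intro sum_le_telescope) simp
  also have "ln (det (Gmat x lam 0)) = ?d * ln lam"
    using lam by (simp add: det_Gmat_0 ln_realpow)
  finally have telescoped: "(\<Sum>t=1..T. leverage x lam t) \<le> ln (det ?G) - ?d * ln lam" by simp
  have "1 + ?z > 0" using lam by (simp add: add_pos_nonneg)
  have "ln (det ?G) \<le> ?d * ln (trace ?G / ?d)"
    using Gmat_pos_definite[OF lam] by (intro ln_det_le_card_mult_ln_mean_trace Gmat_symmetric)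
  also have "\<dots> \<le> ?d * ln (lam * (1 + ?z))"
  proof -
    have "(\<Sum>q=1..T. x q \<bullet> x q) \<le> real T * X^2"
      using sum_mono[of "{1..T}" "\<lambda>q. x q \<bullet> x q" "\<lambda>_. X^2"] assms
      by (simp add: power2_norm_eq_inner[symmetric] power_mono)
    then have "trace ?G / ?d \<le> lam * (1 + ?z)"
      using lam by (simp add: trace_Gmat field_simps)
    moreover have "trace ?G / ?d > 0"
      using lam by (simp add: trace_Gmat add_pos_nonneg sum_nonneg)
    ultimately show ?thesis by (simp add: mult_left_mono)
  qed
  also have "\<dots> = ?d * ln lam + ?d * ln (1 + ?z)"
    using lam \<open>1 + ?z > 0\<close> by (subst ln_mult) (simp_all add: distrib_left)
  finally show ?thesis using telescoped by simp
qed

lemma regret_le_of_round_bounds: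
  assumes X: "\<And>t. t \<in> {1..T} \<Longrightarrow> norm (x t) \<le> X"
    and Y: "\<And>t. t \<in> {1..T} \<Longrightarrow> \<bar>y t\<bar> \<le> Y"
    and "C \<ge> 0"
    and round: "\<And>n. n < T \<Longrightarrow> loss (Suc n)
      \<le> ridge_loss x y lam (Suc n) (theta_r x y lam (Suc n))
         - ridge_loss x y lam n (theta_r x y lam n) + C * leverage x lam (Suc n)"
  shows "(\<Sum>t=1..T. loss t) - (INF \<theta>. Lfix x y T \<theta>)
    \<le> C * real CARD('d) * ln (1 + real T * X^2 / (lam * real CARD('d)))
       + lam * Y^2 * real T / min_pos_eig (Gmat x 0 T)"
proof -
  obtain \<theta> where min: "\<And>\<theta>'. Lfix x y T \<theta> \<le> Lfix x y T \<theta>'"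
    and norm: "\<theta> \<bullet> \<theta> \<le> (\<Sum>t=1..T. (y t)^2) / min_pos_eig (Gmat x 0 T)"
    using least_squares_min_norm_solution[of x y T] by blast
  have "(\<Sum>t=1..T. loss t) \<le> ridge_loss x y lam T (theta_r x y lam T)
      - ridge_loss x y lam 0 (theta_r x y lam 0) + C * (\<Sum>t=1..T. leverage x lam t)"
    using sum_le_telescope[where m="\<lambda>n. ridge_loss x y lam n (theta_r x y lam n)"
        and c="\<lambda>t. C * leverage x lam t", OF round] by (simp add: sum_distrib_left)
  also have "ridge_loss x y lam 0 (theta_r x y lam 0) = 0"
    by (simp add: ridge_loss_def Lfix_def theta_r_def bvec_def)
  also have "ridge_loss x y lam T (theta_r x y lam T) \<le> Lfix x y T \<theta> + lam * (\<theta> \<bullet> \<theta>)"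
    using ridge_loss_minimal[OF _ Gmat_theta_r] lam by (simp add: ridge_loss_def)
  also have "Lfix x y T \<theta> \<le> (INF \<theta>. Lfix x y T \<theta>)"
    using min by (intro cINF_greatest) auto
  also have "lam * (\<theta> \<bullet> \<theta>) \<le> lam * Y^2 * real T / min_pos_eig (Gmat x 0 T)"
  proof -
    have "(y t)^2 \<le> Y^2" if "t \<in> {1..T}" for t
      using power_mono[OF Y[OF that] abs_ge_zero, of 2] by simp
    then have "(\<Sum>t=1..T. (y t)^2) \<le> real T * Y^2"
      using sum_mono[of "{1..T}" "\<lambda>t. (y t)^2" "\<lambda>_. Y^2"] by simp
    with norm have "\<theta> \<bullet> \<theta> \<le> real T * Y^2 / min_pos_eig (Gmat x 0 T)"
      using min_pos_eig_nonneg[OF Gmat_symmetric] by (meson divide_right_mono order_trans)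
    then have "lam * (\<theta> \<bullet> \<theta>) \<le> lam * (real T * Y^2 / min_pos_eig (Gmat x 0 T))"
      by (rule mult_left_mono) (use lam in simp)
    then show ?thesis by (simp add: mult_ac)
  qed
  also have "C * (\<Sum>t=1..T. leverage x lam t)
      \<le> C * (real CARD('d) * ln (1 + real T * X^2 / (lam * real CARD('d))))"
    using sum_leverage_le[OF X] \<open>C \<ge> 0\<close> by (rule mult_left_mono)
  finally show ?thesis by (simp add: mult.assoc)
qed

lemma regret_ridge_le:
  assumes X: "\<And>t. t \<in> {1..T} \<Longrightarrow> norm (x t) \<le> X"
    and y_le: "\<And>t. t \<in> {1..T} \<Longrightarrow> \<bar>y t\<bar> \<le> B"
    and prediction_le: "\<And>t. t \<in> {1..T} \<Longrightarrow> \<bar>x t \<bullet> theta_r x y lam (t - 1)\<bar> \<le> B"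
  shows "regret_ridge x y lam T
    \<le> 4 * B^2 * real CARD('d) * ln (1 + real T * X^2 / (lam * real CARD('d)))
       + lam * B^2 * real T / min_pos_eig (Gmat x 0 T)"
  unfolding regret_ridge_def L_ridge_def
proof (rule regret_le_of_round_bounds[OF X y_le])
  fix n assume "n < T"
  let ?e = "x (Suc n) \<bullet> theta_r x y lam n - y (Suc n)"
  have "\<bar>?e\<bar> \<le> 2 * B"
    using y_le[of "Suc n"] prediction_le[of "Suc n"] \<open>n < T\<close> by simp
  then have "?e^2 \<le> 4 * B^2"
    using power_mono[OF \<open>\<bar>?e\<bar> \<le> 2 * B\<close> abs_ge_zero, of 2] by (simp add: power_mult_distrib)
  then have "?e^2 * leverage x lam (Suc n) \<le> 4 * B^2 * leverage x lam (Suc n)"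
    using leverage_nonneg by (rule mult_right_mono)
  then show "(x (Suc n) \<bullet> theta_r x y lam (Suc n - 1) - y (Suc n))^2
      \<le> ridge_loss x y lam (Suc n) (theta_r x y lam (Suc n))
        - ridge_loss x y lam n (theta_r x y lam n) + 4 * B^2 * leverage x lam (Suc n)"
    using ridge_round_loss_le[of n] by simp
qed (auto simp: zero_le_mult_iff)

lemma regret_forward_le:
  assumes X: "\<And>t. t \<in> {1..T} \<Longrightarrow> norm (x t) \<le> X"
    and Y: "\<And>t. t \<in> {1..T} \<Longrightarrow> \<bar>y t\<bar> \<le> Y"
  shows "regret_forward x y lam T
    \<le> Y^2 * real CARD('d) * ln (1 + real T * X^2 / (lam * real CARD('d)))
       + lam * Y^2 * real T / min_pos_eig (Gmat x 0 T)"
  unfolding regret_forward_def L_forward_def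
proof (rule regret_le_of_round_bounds[OF X Y])
  fix n assume "n < T"
  have "(y (Suc n))^2 \<le> Y^2"
    using power_mono[OF Y[of "Suc n"] abs_ge_zero, of 2] \<open>n < T\<close> by simp
  then have "(y (Suc n))^2 * leverage x lam (Suc n) \<le> Y^2 * leverage x lam (Suc n)"
    using leverage_nonneg by (rule mult_right_mono)
  then show "(x (Suc n) \<bullet> theta_f_round x y lam (Suc n) - y (Suc n))^2
      \<le> ridge_loss x y lam (Suc n) (theta_r x y lam (Suc n))
        - ridge_loss x y lam n (theta_r x y lam n) + Y^2 * leverage x lam (Suc n)"
    using forward_round_loss_le[of n] by simp
qed auto

end

theorem corollary1:
  fixes x :: "nat \<Rightarrow> real^'d" and y :: "nat \<Rightarrow> real"
    and lam X Y :: real and T :: nat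
  assumes "lam > 0" and "T \<ge> 1" and "X > 0" and "Y > 0"
    and "\<And>t. t \<in> {1..T} \<Longrightarrow> norm (x t) \<le> X"
    and "\<And>t. t \<in> {1..T} \<Longrightarrow> \<bar>y t\<bar> \<le> Y"
  shows "(regret_ridge x y lam T \<le>
           (let Yr = max Y (Max {\<bar>x t \<bullet> theta_r x y lam (t - 1)\<bar> | t. t \<in> {1..T}}) in
            4 * Yr^2 * real CARD('d) * ln (1 + real T * X^2 / (lam * real CARD('d)))
            + lam * Yr^2 * real T / min_pos_eig (Gmat x 0 T))) \<and>
         regret_forward x y lam T \<le>
            1 * Y^2 * real CARD('d) * ln (1 + real T * X^2 / (lam * real CARD('d)))
            + lam * Y^2 * real T / min_pos_eig (Gmat x 0 T)"
proof -
  define Yr where "Yr = max Y (Max {\<bar>x t \<bullet> theta_r x y lam (t - 1)\<bar> | t. t \<in> {1..T}})"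
  have "\<bar>x t \<bullet> theta_r x y lam (t - 1)\<bar> \<le> Yr" if "t \<in> {1..T}" for t
  proof -
    have "finite {\<bar>x t \<bullet> theta_r x y lam (t - 1)\<bar> | t. t \<in> {1..T}}"
      by (simp add: setcompr_eq_image)
    then show ?thesis using that unfolding Yr_def by (intro max.coboundedI2 Max_ge) auto
  qed
  moreover have "\<bar>y t\<bar> \<le> Yr" if "t \<in> {1..T}" for t
    using assms(6)[OF that] unfolding Yr_def by simp
  ultimately have "regret_ridge x y lam T
      \<le> 4 * Yr^2 * real CARD('d) * ln (1 + real T * X^2 / (lam * real CARD('d)))
         + lam * Yr^2 * real T / min_pos_eig (Gmat x 0 T)"
    by (intro regret_ridge_le[OF assms(1,5)])
  moreover have "regret_forward x y lam T
      \<le> Y^2 * real CARD('d) * ln (1 + real T * X^2 / (lam * real CARD('d)))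
         + lam * Y^2 * real T / min_pos_eig (Gmat x 0 T)"
    by (rule regret_forward_le[OF assms(1,5,6)])
  ultimately show ?thesis unfolding Let_def Yr_def by simp
qed

end
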